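(* Consider the one-ported gather/scatter tree model described in the context, with arbitrary block sizes $m_i\ge0$ and arbitrary parameters $\alpha_{ij},\beta_{ij},\gamma_i\ge 0$. For a nonempty set $P\subseteq\{0,\dots,p-1\}$ and $r\in P$ let $\mathrm{OPT}(P,r)$ be the minimum completion time of a communication tree on $P$ with root $r$. Then $\mathrm{OPT}(\{q\},q)=0$ for every $q$, and for $|P|\ge 2$, \[ \mathrm{OPT}(P,r)=\min\Big\{\ \min_{r'\in P\setminus\{r\}}\big[\max(\gamma_r m_r,\mathrm{OPT}(P\setminus\{r\},r'))+\alpha_{r'r}+\beta_{r'r}\mathrm{Size}(P\setminus\{r\})\big],\ \ \min_{(R,\bar R),\,r'\in\bar R}\big[\max(\mathrm{OPT}(R,r),\mathrm{OPT}(\bar R,r'))+\alpha_{r'r}+\beta_{r'r}\mathrm{Size}(\bar R)\big]\Big\}, \] where the second minimum ranges over all partitions $P=R\cup\bar R$ into disjoint sets with $r\in R$, $|R|\ge 2$, $\bar R\neq\emptyset$, and over $r'\in\bar R$. (That is, optimal trees have optimal substructure.)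
   Context: There are $p$ processors $0,\dots,p-1$; processor $i$ has a data block of size $m_i\ge 0$. For a set $R$ of processors, $\mathrm{Size}(R)=\sum_{i\in R}m_i$. For every ordered pair of distinct processors $i,j$ there are a start-up latency $\alpha_{ij}\ge 0$ and a time per unit $\beta_{ij}\ge 0$, and each processor $i$ has a local copy cost $\gamma_i\ge0$ per unit. A communication tree on a nonempty finite set $R$ of processors with root $r\in R$ is either the trivial tree (only when $R=\{r\}$), or consists of the root $r$ together with a finite sequence of entries $(E_0,\dots,E_j)$ in which exactly one entry is a special "local copy" marker and every other entry $E_t$ is a communication tree on a set $R_t$ with root $r_t$, there is at least one such tree entry, and the sets $\{r\}$ and the $R_t$ partition $R$. Completion time (one-ported): the trivial tree has cost $0$; otherwise with $c_{-1}=0$, $c_t=c_{t-1}+\gamma_r m_r$ if $E_t$ is the local copy marker and $c_t=\max(c_{t-1},\mathrm{cost}(E_t))+\alpha_{r_t r}+\beta_{r_t r}\,\mathrm{Size}(R_t)$ if $E_t$ is a tree on $R_t$ with root $r_t$; $\mathrm{cost}(T)=c_j$. *)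

theory Defs
  imports Main "HOL.Real"
begin

datatype ctree = CT nat "centry list"
and centry = LocalCopy | Sub ctree

fun root :: "ctree \<Rightarrow> nat" where
  "root (CT r es) = r"

fun nodes :: "ctree \<Rightarrow> nat set" and nodes_e :: "centry \<Rightarrow> nat set" where
  "nodes (CT r es) = {r} \<union> (\<Union>e\<in>set es. nodes_e e)"
| "nodes_e LocalCopy = {}"
| "nodes_e (Sub T) = nodes T"

definition subtrees :: "centry list \<Rightarrow> ctree list" where
  "subtrees es = [T. Sub T \<leftarrow> es]"

fun wf_tree :: "ctree \<Rightarrow> bool" and wf_e :: "centry \<Rightarrow> bool" where
  "wf_tree (CT r es) =
     (es = [] \<or>
      (length (filter (\<lambda>e. e = LocalCopy) es) = 1 \<and>
       subtrees es \<noteq> [] \<and>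
       (\<forall>i j. i < j \<and> j < length (subtrees es) \<longrightarrow>
           nodes (subtrees es ! i) \<inter> nodes (subtrees es ! j) = {}) \<and>
       (\<forall>e\<in>set es. r \<notin> nodes_e e) \<and>
       (\<forall>e\<in>set es. wf_e e)))"
| "wf_e LocalCopy = True"
| "wf_e (Sub T) = wf_tree T"

definition is_tree :: "ctree \<Rightarrow> nat set \<Rightarrow> nat \<Rightarrow> bool" where
  "is_tree T R r \<longleftrightarrow> wf_tree T \<and> nodes T = R \<and> root T = r"

definition Size :: "(nat \<Rightarrow> real) \<Rightarrow> nat set \<Rightarrow> real" where
  "Size m R = (\<Sum>i\<in>R. m i)"

text \<open>One-ported completion time. m: block sizes, al i j = alpha_ij, be i j = beta_ij,
ga i = gamma_i. costs r c es processes entries es of a tree with root r, starting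
from accumulated value c (c_{-1} = 0).\<close>
fun cost :: "(nat \<Rightarrow> real) \<Rightarrow> (nat \<Rightarrow> nat \<Rightarrow> real) \<Rightarrow> (nat \<Rightarrow> nat \<Rightarrow> real) \<Rightarrow> (nat \<Rightarrow> real)
              \<Rightarrow> ctree \<Rightarrow> real"
and costs :: "(nat \<Rightarrow> real) \<Rightarrow> (nat \<Rightarrow> nat \<Rightarrow> real) \<Rightarrow> (nat \<Rightarrow> nat \<Rightarrow> real) \<Rightarrow> (nat \<Rightarrow> real)
              \<Rightarrow> nat \<Rightarrow> real \<Rightarrow> centry list \<Rightarrow> real" where
  "cost m al be ga (CT r es) = costs m al be ga r 0 es"
| "costs m al be ga r c [] = c"
| "costs m al be ga r c (LocalCopy # es) = costs m al be ga r (c + ga r * m r) es"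
| "costs m al be ga r c (Sub T # es) =
     costs m al be ga r
       (max c (cost m al be ga T) + al (root T) r + be (root T) r * Size m (nodes T)) es"

definition OPT :: "(nat \<Rightarrow> real) \<Rightarrow> (nat \<Rightarrow> nat \<Rightarrow> real) \<Rightarrow> (nat \<Rightarrow> nat \<Rightarrow> real) \<Rightarrow> (nat \<Rightarrow> real)
              \<Rightarrow> nat set \<Rightarrow> nat \<Rightarrow> real" where
  "OPT m al be ga P r = Min {cost m al be ga T | T. is_tree T P r}"

end

theory Submission
  imports Defs
begin

text \<open>
  A trailing local copy can be moved to the front of the entry list without increasing the
  completion time (this uses \<open>0 \<le> \<gamma>\<^sub>r m\<^sub>r\<close>), so some optimal tree on \<open>P\<close> ends
  with a subtree \<open>T\<close>; its cost is \<open>max (cost of the rest, cost T) + \<alpha> + \<beta> Size(nodes T)\<close>.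
  Either the rest is the local copy alone, or it is itself a tree on \<open>R = P - nodes T\<close> with
  at least two nodes. Replacing both parts by optimal trees does not increase the cost, which
  bounds \<open>OPT(P, r)\<close> below by a candidate; conversely every candidate is the cost of such a
  composite tree. Optima exist because subtree roots are distinct, so only finitely many
  trees have their nodes in a given finite set.
\<close>

lemma subtrees_simps [simp]:
  "subtrees [] = []"
  "subtrees (LocalCopy # es) = subtrees es"
  "subtrees (Sub T # es) = T # subtrees es"
  "subtrees (es @ fs) = subtrees es @ subtrees fs"
  by (simp_all add: subtrees_def)

lemma in_set_subtrees [simp]: "T \<in> set (subtrees es) \<longleftrightarrow> Sub T \<in> set es"
proof (induction es)
  case (Cons e es) then show ?case by (cases e) auto
qed simp

lemma length_entries:
  "length es = length (filter (\<lambda>e. e = LocalCopy) es) + length (subtrees es)"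
proof (induction es)
  case (Cons e es) then show ?case by (cases e) auto
qed simp

lemma nodes_CT:
  "nodes (CT r es) = insert r (\<Union>T\<in>set (subtrees es). nodes T)"
proof (induction es)
  case (Cons e es) then show ?case by (cases e) auto
qed simp

lemma root_in_nodes [simp]: "root T \<in> nodes T"
  by (cases T) auto

lemma finite_nodes [simp]: "finite (nodes T)" and "finite (nodes_e e)"
  by (induction T and e) auto

lemma wf_tree_CT:
  "wf_tree (CT r es) \<longleftrightarrow> es = [] \<or>
     (length (filter (\<lambda>e. e = LocalCopy) es) = 1 \<and> subtrees es \<noteq> [] \<and>
      sorted_wrt (\<lambda>T T'. nodes T \<inter> nodes T' = {}) (subtrees es) \<and>
      (\<forall>T. Sub T \<in> set es \<longrightarrow> r \<notin> nodes T \<and> wf_tree T))"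
proof -
  have "(\<forall>e\<in>set es. r \<notin> nodes_e e) \<and> (\<forall>e\<in>set es. wf_e e) \<longleftrightarrow>
        (\<forall>T. Sub T \<in> set es \<longrightarrow> r \<notin> nodes T \<and> wf_tree T)"
    by (metis nodes_e.simps wf_e.simps centry.exhaust empty_iff)
  then show ?thesis
    unfolding wf_tree.simps sorted_wrt_iff_nth_less by blast
qed

declare wf_tree.simps(1) [simp del] nodes.simps(1) [simp del]

lemma in_nodes_CT [simp]:
  "x \<in> nodes (CT r es) \<longleftrightarrow> x = r \<or> (\<exists>T. Sub T \<in> set es \<and> x \<in> nodes T)"
  by (auto simp: nodes_CT)

lemma wf_tree_leaf [simp]: "wf_tree (CT q [])"
  by (simp add: wf_tree_CT)

lemma nodes_leaf [simp]: "nodes (CT q []) = {q}"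
  by (simp add: nodes_CT)

lemma nodes_subtree_subset: "Sub T \<in> set es \<Longrightarrow> nodes T \<subseteq> nodes (CT r es)"
  by auto

lemma nodes_snoc [simp]: "nodes (CT r (es @ [Sub T])) = nodes (CT r es) \<union> nodes T"
  by auto

lemma distinct_roots:
  "sorted_wrt (\<lambda>T T'. nodes T \<inter> nodes T' = {}) Ts \<Longrightarrow> distinct (map root Ts)"
proof (induction Ts)
  case (Cons T Ts)
  have "root T \<noteq> root T'" if "T' \<in> set Ts" for T'
  proof -
    have "nodes T \<inter> nodes T' = {}" using Cons.prems that by simp
    then show ?thesis by (metis disjoint_iff root_in_nodes)
  qed
  with Cons show ?case by auto
qed simp

lemma two_le_card_nodes:
  assumes "wf_tree (CT r es)" "es \<noteq> []"
  shows "2 \<le> card (nodes (CT r es))"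
proof -
  have "subtrees es \<noteq> []" using assms by (simp add: wf_tree_CT)
  then obtain T where T: "Sub T \<in> set es"
    using list.set_sel(1) in_set_subtrees by blast
  have "r \<notin> nodes T" using assms T by (simp add: wf_tree_CT)
  then have "root T \<noteq> r" using root_in_nodes[of T] by auto
  then have "card {r, root T} = 2" by simp
  moreover have "card {r, root T} \<le> card (nodes (CT r es))"
    using T root_in_nodes[of T] by (intro card_mono) auto
  ultimately show ?thesis by simp
qed

lemma wf_tree_copy_then_subtree [simp]:
  "wf_tree (CT r [LocalCopy, Sub T]) \<longleftrightarrow> wf_tree T \<and> r \<notin> nodes T"
  by (auto simp: wf_tree_CT)

lemma wf_tree_snoc_iff:
  assumes "es \<noteq> []" "es \<noteq> [LocalCopy]"
  shows "wf_tree (CT r (es @ [Sub T])) \<longleftrightarrow>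
           wf_tree (CT r es) \<and> wf_tree T \<and> nodes (CT r es) \<inter> nodes T = {}"
    (is "?snoc \<longleftrightarrow> ?es \<and> ?T \<and> ?disj")
proof
  assume ?snoc
  then have one: "length (filter (\<lambda>e. e = LocalCopy) es) = 1"
    and sorted: "sorted_wrt (\<lambda>T T'. nodes T \<inter> nodes T' = {}) (subtrees es)"
    and disj: "\<forall>T'\<in>set (subtrees es). nodes T' \<inter> nodes T = {}"
    and subs: "\<forall>T'. Sub T' \<in> set es \<or> T' = T \<longrightarrow> r \<notin> nodes T' \<and> wf_tree T'"
    by (simp_all add: wf_tree_CT sorted_wrt_append)
  have "subtrees es \<noteq> []"
  proof
    assume "subtrees es = []"
    then have "length es = 1" using one length_entries[of es] by simp
    then obtain e where "es = [e]" by (auto simp: length_Suc_conv)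
    with one assms(2) show False by (cases e) auto
  qed
  with one sorted subs have ?es by (simp add: wf_tree_CT)
  moreover have ?T using subs by simp
  moreover have ?disj using disj subs by fastforce
  ultimately show "?es \<and> ?T \<and> ?disj" by blast
next
  assume asm: "?es \<and> ?T \<and> ?disj"
  have "nodes T' \<inter> nodes T = {}" if "Sub T' \<in> set es" for T'
    using asm nodes_subtree_subset[OF that, of r] by blast
  moreover have "r \<notin> nodes T"
    using asm in_nodes_CT[of r r es] by blast
  ultimately show ?snoc
    using asm assms by (auto simp: wf_tree_CT sorted_wrt_append)
qed

lemma not_wf_tree_copy_only [simp]: "\<not> wf_tree (CT r [LocalCopy])"
  by (simp add: wf_tree_CT)

lemma is_tree_CT:
  assumes "is_tree T P r"
  obtains es where "T = CT r es"
  using assms by (cases T) (simp add: is_tree_def)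

lemma is_tree_trivial_iff: "is_tree (CT r []) P r \<longleftrightarrow> P = {r}"
  by (auto simp: is_tree_def wf_tree_CT)

lemma is_tree_singleton_iff: "is_tree T {q} q \<longleftrightarrow> T = CT q []"
proof
  assume tree: "is_tree T {q} q"
  then obtain es where T: "T = CT q es" by (rule is_tree_CT)
  have "es = []"
  proof (rule ccontr)
    assume "es \<noteq> []"
    moreover have "wf_tree (CT q es)" "nodes (CT q es) = {q}"
      using tree T by (simp_all add: is_tree_def)
    ultimately show False using two_le_card_nodes[of q es] by simp
  qed
  with T show "T = CT q []" by simp
qed (simp add: is_tree_trivial_iff)

lemma costs_append:
  "costs m al be ga r c (es @ fs) = costs m al be ga r (costs m al be ga r c es) fs"
proof (induction es arbitrary: c)
  case (Cons e es) then show ?case by (cases e) auto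
qed simp

lemma cost_snoc:
  "cost m al be ga (CT r (es @ [Sub T])) =
     max (cost m al be ga (CT r es)) (cost m al be ga T) + al (root T) r
       + be (root T) r * Size m (nodes T)"
  by (simp add: costs_append)

lemma costs_shift_le:
  assumes "LocalCopy \<notin> set es" "c' \<le> c + d" "0 \<le> d"
  shows "costs m al be ga r c' es \<le> costs m al be ga r c es + d"
  using assms
proof (induction es arbitrary: c c')
  case (Cons e es)
  then obtain T where e: "e = Sub T" by (cases e) auto
  let ?x = "cost m al be ga T" and ?a = "al (root T) r + be (root T) r * Size m (nodes T)"
  have "max c' ?x + ?a \<le> (max c ?x + ?a) + d" using Cons.prems by (auto simp: max_def)
  then show ?case using Cons e by simp
qed simp

lemma costs_copy_first_le:
  assumes "LocalCopy \<notin> set es" "0 \<le> ga r * m r"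
  shows "costs m al be ga r c (LocalCopy # es) \<le> costs m al be ga r c (es @ [LocalCopy])"
proof -
  have "costs m al be ga r c (LocalCopy # es) = costs m al be ga r (c + ga r * m r) es"
    by simp
  also have "\<dots> \<le> costs m al be ga r c es + ga r * m r"
    using assms by (intro costs_shift_le) auto
  also have "\<dots> = costs m al be ga r c (es @ [LocalCopy])"
    by (simp add: costs_append)
  finally show ?thesis .
qed

lemma tree_ending_in_subtree:
  assumes tree: "is_tree (CT r es) P r" and "es \<noteq> []" and "0 \<le> ga r * m r"
  obtains es' T where "is_tree (CT r (es' @ [Sub T])) P r"
    "cost m al be ga (CT r (es' @ [Sub T])) \<le> cost m al be ga (CT r es)"
proof (cases "last es")
  case (Sub T)
  then have "es = butlast es @ [Sub T]"
    using \<open>es \<noteq> []\<close> by (metis append_butlast_last_id)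
  then show ?thesis using that[of "butlast es" T] tree by simp
next
  case LocalCopy
  then obtain es1 where es: "es = es1 @ [LocalCopy]"
    using \<open>es \<noteq> []\<close> by (metis append_butlast_last_id)
  have wf: "wf_tree (CT r es)" using tree by (simp add: is_tree_def)
  then have "LocalCopy \<notin> set es1" "subtrees es1 \<noteq> []"
    using es by (auto simp: wf_tree_CT filter_empty_conv)
  then have "es1 \<noteq> []" by auto
  then have "last es1 \<noteq> LocalCopy"
    using \<open>LocalCopy \<notin> set es1\<close> last_in_set by metis
  then obtain T where "last es1 = Sub T" by (cases "last es1") auto
  with \<open>es1 \<noteq> []\<close> have front: "LocalCopy # es1 = (LocalCopy # butlast es1) @ [Sub T]"
    using append_butlast_last_id[of es1] by simp
  have "is_tree (CT r (LocalCopy # es1)) P r"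
    using tree es by (auto simp: is_tree_def wf_tree_CT)
  moreover have "cost m al be ga (CT r (LocalCopy # es1)) \<le> cost m al be ga (CT r es)"
    using costs_copy_first_le[where c = 0 and ga = ga and r = r and m = m and al = al and be = be,
        OF \<open>LocalCopy \<notin> set es1\<close> assms(3)] es by simp
  ultimately show ?thesis using that unfolding front by blast
qed

lemma length_subtrees_le_card_nodes:
  assumes "wf_tree (CT r es)"
  shows "length (subtrees es) \<le> card (nodes (CT r es))"
proof -
  have "sorted_wrt (\<lambda>T T'. nodes T \<inter> nodes T' = {}) (subtrees es)"
    using assms by (auto simp: wf_tree_CT)
  then have "length (subtrees es) = card (root ` set (subtrees es))"
    using distinct_roots distinct_card by fastforce
  also have "\<dots> \<le> card (nodes (CT r es))"
    using nodes_subtree_subset root_in_nodes by (intro card_mono finite_nodes) fastforce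
  finally show ?thesis .
qed

lemma length_entries_le:
  assumes "wf_tree (CT r es)"
  shows "length es \<le> Suc (card (nodes (CT r es)))"
proof -
  have "length (filter (\<lambda>e. e = LocalCopy) es) \<le> 1"
    using assms by (cases "es = []") (auto simp: wf_tree_CT)
  then show ?thesis
    using length_entries[of es] length_subtrees_le_card_nodes[OF assms] by linarith
qed

lemma finite_trees_within:
  "finite A \<Longrightarrow> finite {T. wf_tree T \<and> nodes T \<subseteq> A}"
proof (induction "card A" arbitrary: A rule: less_induct)
  case less
  define entries where
    "entries r = insert LocalCopy (Sub ` {T. wf_tree T \<and> nodes T \<subseteq> A - {r}})" for r
  have "finite (entries r)" if "r \<in> A" for r
  proof -
    have "card (A - {r}) < card A" using less.prems that by (rule card_Diff1_less)
    then show ?thesis using less(1)[of "A - {r}"] less.prems by (simp add: entries_def)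
  qed
  then have "finite (\<Union>r\<in>A. CT r ` {es. set es \<subseteq> entries r \<and> length es \<le> Suc (card A)})"
    using less.prems by (auto intro: finite_lists_length_le)
  moreover have "{T. wf_tree T \<and> nodes T \<subseteq> A} \<subseteq>
      (\<Union>r\<in>A. CT r ` {es. set es \<subseteq> entries r \<and> length es \<le> Suc (card A)})"
  proof clarify
    fix T assume wf: "wf_tree T" and sub: "nodes T \<subseteq> A"
    obtain r es where T: "T = CT r es" by (cases T)
    have "set es \<subseteq> entries r"
    proof
      fix e assume e: "e \<in> set es"
      show "e \<in> entries r"
      proof (cases e)
        case (Sub T')
        with e wf T have "wf_tree T'" "r \<notin> nodes T'" by (auto simp: wf_tree_CT)
        moreover have "nodes T' \<subseteq> A" using sub T e Sub nodes_subtree_subset by blast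
        ultimately show ?thesis using Sub by (auto simp: entries_def)
      qed (simp add: entries_def)
    qed
    moreover have "length es \<le> Suc (card A)"
      using length_entries_le[of r es] card_mono[OF less.prems sub] wf T by simp
    moreover have "r \<in> A" using sub T by auto
    ultimately show "T \<in> (\<Union>r\<in>A. CT r ` {es. set es \<subseteq> entries r \<and> length es \<le> Suc (card A)})"
      using T by blast
  qed
  ultimately show ?case by (rule finite_subset[rotated])
qed

lemma exists_tree:
  assumes "finite Q" "r \<notin> Q"
  shows "\<exists>T. is_tree T (insert r Q) r"
  using assms
proof (induction Q rule: finite_induct)
  case empty
  then show ?case using is_tree_trivial_iff by blast
next
  case (insert q Q)
  then obtain T where "is_tree T (insert r Q) r" by auto
  then obtain es where tree: "is_tree (CT r es) (insert r Q) r"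
    using is_tree_CT by metis
  have "r \<notin> Q" "r \<noteq> q" "q \<notin> Q" using insert by auto
  show ?case
  proof (cases "es = []")
    case True
    with tree \<open>r \<notin> Q\<close> have "Q = {}" by (auto simp: is_tree_trivial_iff)
    with \<open>r \<noteq> q\<close> have "is_tree (CT r [LocalCopy, Sub (CT q [])]) (insert r (insert q Q)) r"
      by (auto simp: is_tree_def wf_tree_CT)
    then show ?thesis by blast
  next
    case False
    moreover have "es \<noteq> [LocalCopy]" using tree by (auto simp: is_tree_def)
    ultimately have "wf_tree (CT r (es @ [Sub (CT q [])]))"
      using tree \<open>r \<noteq> q\<close> \<open>q \<notin> Q\<close> by (simp add: wf_tree_snoc_iff is_tree_def)
    then have "is_tree (CT r (es @ [Sub (CT q [])])) (insert r (insert q Q)) r"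
      using tree by (auto simp: is_tree_def)
    then show ?thesis by blast
  qed
qed

lemma finite_costs_of_trees:
  assumes "finite P"
  shows "finite {cost m al be ga T | T. is_tree T P r}"
proof -
  have "{cost m al be ga T | T. is_tree T P r} \<subseteq> cost m al be ga ` {T. wf_tree T \<and> nodes T \<subseteq> P}"
    by (auto simp: is_tree_def)
  moreover have "finite (cost m al be ga ` {T. wf_tree T \<and> nodes T \<subseteq> P})"
    using finite_trees_within[OF assms] by simp
  ultimately show ?thesis by (rule finite_subset)
qed

lemma OPT_le:
  assumes "is_tree T P r"
  shows "OPT m al be ga P r \<le> cost m al be ga T"
proof -
  have "finite P" using assms by (auto simp: is_tree_def)
  then show ?thesis
    unfolding OPT_def using assms by (intro Min_le finite_costs_of_trees) auto
qed

lemma OPT_attained: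
  assumes "finite P" "r \<in> P"
  obtains es where "is_tree (CT r es) P r" "cost m al be ga (CT r es) = OPT m al be ga P r"
proof -
  have "\<exists>T. is_tree T P r" using exists_tree[of "P - {r}" r] assms by (simp add: insert_absorb)
  then have "OPT m al be ga P r \<in> {cost m al be ga T | T. is_tree T P r}"
    unfolding OPT_def using finite_costs_of_trees[OF assms(1)] by (intro Min_in) auto
  then obtain T where T: "is_tree T P r" "cost m al be ga T = OPT m al be ga P r" by auto
  obtain es where "T = CT r es" using T(1) by (rule is_tree_CT)
  with T that show ?thesis by blast
qed

lemma OPT_singleton: "OPT m al be ga {q} q = 0"
proof -
  have "{cost m al be ga T | T. is_tree T {q} q} = {0}"
    by (simp add: is_tree_singleton_iff)
  then show ?thesis by (simp add: OPT_def)
qed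

lemma OPT_le_copy_then_subtree:
  assumes "finite P" "r \<in> P" "r' \<in> P - {r}"
  shows "OPT m al be ga P r \<le>
           max (ga r * m r) (OPT m al be ga (P - {r}) r') + al r' r + be r' r * Size m (P - {r})"
proof -
  obtain es where T: "is_tree (CT r' es) (P - {r}) r'"
    "cost m al be ga (CT r' es) = OPT m al be ga (P - {r}) r'"
    using OPT_attained[of "P - {r}" r'] assms by blast
  then have "wf_tree (CT r' es)" "nodes (CT r' es) = P - {r}"
    by (simp_all add: is_tree_def)
  with assms(2) have "is_tree (CT r [LocalCopy, Sub (CT r' es)]) P r"
    by (simp add: is_tree_def nodes_CT insert_absorb)
  then have "OPT m al be ga P r \<le> cost m al be ga (CT r [LocalCopy, Sub (CT r' es)])"
    by (rule OPT_le)
  also have "\<dots> = max (ga r * m r) (OPT m al be ga (P - {r}) r') + al r' r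
                   + be r' r * Size m (P - {r})"
    using T by (simp add: is_tree_def)
  finally show ?thesis .
qed

lemma OPT_le_split:
  assumes "finite P" "R \<subseteq> P" "r \<in> R" "2 \<le> card R" "r' \<in> P - R"
  shows "OPT m al be ga P r \<le>
           max (OPT m al be ga R r) (OPT m al be ga (P - R) r') + al r' r + be r' r * Size m (P - R)"
proof -
  have "finite R" using assms finite_subset by blast
  then obtain es where TR: "is_tree (CT r es) R r" "cost m al be ga (CT r es) = OPT m al be ga R r"
    using OPT_attained[of R r] assms by blast
  obtain es' where T: "is_tree (CT r' es') (P - R) r'"
    "cost m al be ga (CT r' es') = OPT m al be ga (P - R) r'"
    using OPT_attained[of "P - R" r'] assms by blast
  have "es \<noteq> []" using TR assms(4) by (auto simp: is_tree_trivial_iff)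
  moreover have "es \<noteq> [LocalCopy]" using TR by (auto simp: is_tree_def)
  ultimately have "wf_tree (CT r (es @ [Sub (CT r' es')]))"
    using TR T by (auto simp: is_tree_def wf_tree_snoc_iff)
  moreover have "nodes (CT r (es @ [Sub (CT r' es')])) = P"
    using TR T assms(2) by (auto simp: is_tree_def)
  ultimately have "is_tree (CT r (es @ [Sub (CT r' es')])) P r"
    by (simp add: is_tree_def)
  then have "OPT m al be ga P r \<le> cost m al be ga (CT r (es @ [Sub (CT r' es')]))"
    by (rule OPT_le)
  also have "\<dots> = max (OPT m al be ga R r) (OPT m al be ga (P - R) r') + al r' r
                   + be r' r * Size m (P - R)"
    unfolding cost_snoc using TR T by (simp add: is_tree_def)
  finally show ?thesis .
qed

lemma copy_then_subtree_candidate_le: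
  assumes tree: "is_tree (CT r [LocalCopy, Sub T]) P r"
    and le: "cost m al be ga (CT r [LocalCopy, Sub T]) \<le> c"
  shows "\<exists>r'\<in>P - {r}. max (ga r * m r) (OPT m al be ga (P - {r}) r') + al r' r
                       + be r' r * Size m (P - {r}) \<le> c"
proof
  have "wf_tree T" "r \<notin> nodes T" "P = insert r (nodes T)"
    using tree by (simp_all add: is_tree_def nodes_CT)
  then have nodes: "P - {r} = nodes T" by simp
  then show "root T \<in> P - {r}" by simp
  have "max (ga r * m r) (OPT m al be ga (P - {r}) (root T)) \<le> max (ga r * m r) (cost m al be ga T)"
    using \<open>wf_tree T\<close> nodes by (intro max.mono OPT_le) (simp_all add: is_tree_def)
  then have "max (ga r * m r) (OPT m al be ga (P - {r}) (root T)) + al (root T) r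
               + be (root T) r * Size m (P - {r}) \<le> cost m al be ga (CT r [LocalCopy, Sub T])"
    by (simp add: nodes)
  with le show "max (ga r * m r) (OPT m al be ga (P - {r}) (root T)) + al (root T) r
                  + be (root T) r * Size m (P - {r}) \<le> c"
    by linarith
qed

lemma split_candidate_le:
  assumes tree: "is_tree (CT r (es @ [Sub T])) P r" and "es \<noteq> []" "es \<noteq> [LocalCopy]"
    and le: "cost m al be ga (CT r (es @ [Sub T])) \<le> c"
  shows "\<exists>R r'. R \<subseteq> P \<and> r \<in> R \<and> 2 \<le> card R \<and> r' \<in> P - R \<and>
            max (OPT m al be ga R r) (OPT m al be ga (P - R) r') + al r' r
              + be r' r * Size m (P - R) \<le> c"
proof (intro exI conjI)
  define R where "R = nodes (CT r es)"
  have wf: "wf_tree (CT r es)" "wf_tree T" and disj: "R \<inter> nodes T = {}"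
    and P: "P = R \<union> nodes T"
    using tree assms(2,3) by (simp_all add: is_tree_def wf_tree_snoc_iff R_def)
  then have nodes: "P - R = nodes T" by auto
  show "R \<subseteq> P" "r \<in> R" "root T \<in> P - R" using P nodes by (auto simp: R_def)
  show "2 \<le> card R" using two_le_card_nodes[OF wf(1) assms(2)] by (simp add: R_def)
  have "max (OPT m al be ga R r) (OPT m al be ga (P - R) (root T))
          \<le> max (cost m al be ga (CT r es)) (cost m al be ga T)"
    using wf nodes by (intro max.mono OPT_le) (simp_all add: is_tree_def R_def)
  with le show "max (OPT m al be ga R r) (OPT m al be ga (P - R) (root T)) + al (root T) r
                  + be (root T) r * Size m (P - R) \<le> c"
    unfolding cost_snoc nodes by linarith
qed

lemma candidate_le_OPT:
  assumes "finite P" "r \<in> P" "2 \<le> card P" "0 \<le> ga r * m r"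
  shows "(\<exists>r'\<in>P - {r}. max (ga r * m r) (OPT m al be ga (P - {r}) r') + al r' r
                         + be r' r * Size m (P - {r}) \<le> OPT m al be ga P r) \<or>
         (\<exists>R r'. R \<subseteq> P \<and> r \<in> R \<and> 2 \<le> card R \<and> r' \<in> P - R \<and>
            max (OPT m al be ga R r) (OPT m al be ga (P - R) r') + al r' r
              + be r' r * Size m (P - R) \<le> OPT m al be ga P r)"
proof -
  obtain es where opt: "is_tree (CT r es) P r" "cost m al be ga (CT r es) = OPT m al be ga P r"
    using OPT_attained assms(1,2) by blast
  have "es \<noteq> []" using opt assms(3) by (auto simp: is_tree_trivial_iff)
  then obtain es' T where tree: "is_tree (CT r (es' @ [Sub T])) P r"
    and le: "cost m al be ga (CT r (es' @ [Sub T])) \<le> OPT m al be ga P r"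
    using tree_ending_in_subtree[where m = m and al = al and be = be and ga = ga, OF opt(1) _ assms(4)]
    unfolding opt(2) by blast
  have "es' \<noteq> []"
    using tree by (auto simp: is_tree_def wf_tree_CT)
  show ?thesis
  proof (cases "es' = [LocalCopy]")
    case True
    with tree le have "is_tree (CT r [LocalCopy, Sub T]) P r"
      and "cost m al be ga (CT r [LocalCopy, Sub T]) \<le> OPT m al be ga P r"
      by simp_all
    then show ?thesis by (intro disjI1 copy_then_subtree_candidate_le)
  next
    case False
    with tree \<open>es' \<noteq> []\<close> le show ?thesis by (intro disjI2 split_candidate_le)
  qed
qed

theorem OPT_recursion:
  assumes "finite P" "r \<in> P" "2 \<le> card P" "0 \<le> ga r * m r"
  shows "OPT m al be ga P r =
           Min ({max (ga r * m r) (OPT m al be ga (P - {r}) r') + al r' r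
                   + be r' r * Size m (P - {r}) | r'. r' \<in> P - {r}}
                \<union>
                {max (OPT m al be ga R r) (OPT m al be ga (P - R) r') + al r' r
                   + be r' r * Size m (P - R)
                 | R r'. R \<subseteq> P \<and> r \<in> R \<and> card R \<ge> 2 \<and> P - R \<noteq> {} \<and> r' \<in> P - R})"
    (is "_ = Min (?copy \<union> ?split)")
proof -
  have "?split \<subseteq> (\<lambda>(R, r'). max (OPT m al be ga R r) (OPT m al be ga (P - R) r') + al r' r
                   + be r' r * Size m (P - R)) ` (Pow P \<times> P)"
    by (auto simp: image_iff)
  then have "finite ?split"
    by (rule finite_subset) (simp add: assms(1))
  then have finite: "finite (?copy \<union> ?split)"
    using assms(1) by simp
  have lower: "OPT m al be ga P r \<le> v" if "v \<in> ?copy \<union> ?split" for v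
    using that
  proof
    assume "v \<in> ?copy"
    then show ?thesis using OPT_le_copy_then_subtree[OF assms(1,2)] by blast
  next
    assume "v \<in> ?split"
    then show ?thesis using OPT_le_split[OF assms(1)] by blast
  qed
  obtain v where v: "v \<in> ?copy \<union> ?split" "v \<le> OPT m al be ga P r"
    using candidate_le_OPT[where m = m and al = al and be = be and ga = ga, OF assms] by blast
  have "OPT m al be ga P r = v" using lower[OF v(1)] v(2) by (rule order.antisym)
  with v(1) have "Min (?copy \<union> ?split) = OPT m al be ga P r"
    by (intro Min_eqI finite lower) simp_all
  then show ?thesis by simp
qed

theorem corollary1:
  fixes p :: nat
    and m :: "nat \<Rightarrow> real"
    and al be :: "nat \<Rightarrow> nat \<Rightarrow> real"
    and ga :: "nat \<Rightarrow> real"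
  assumes m_nonneg: "\<And>i. i < p \<Longrightarrow> m i \<ge> 0"
    and al_nonneg: "\<And>i j. i < p \<Longrightarrow> j < p \<Longrightarrow> i \<noteq> j \<Longrightarrow> al i j \<ge> 0"
    and be_nonneg: "\<And>i j. i < p \<Longrightarrow> j < p \<Longrightarrow> i \<noteq> j \<Longrightarrow> be i j \<ge> 0"
    and ga_nonneg: "\<And>i. i < p \<Longrightarrow> ga i \<ge> 0"
  shows "(\<forall>q<p. OPT m al be ga {q} q = 0) \<and>
         (\<forall>P r. P \<subseteq> {0..<p} \<and> r \<in> P \<and> card P \<ge> 2 \<longrightarrow>
            OPT m al be ga P r =
              Min ({max (ga r * m r) (OPT m al be ga (P - {r}) r') + al r' r
                      + be r' r * Size m (P - {r}) | r'. r' \<in> P - {r}}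
                   \<union>
                   {max (OPT m al be ga R r) (OPT m al be ga (P - R) r') + al r' r
                      + be r' r * Size m (P - R)
                    | R r'. R \<subseteq> P \<and> r \<in> R \<and> card R \<ge> 2 \<and> P - R \<noteq> {} \<and> r' \<in> P - R}))"
proof (intro conjI allI impI OPT_singleton OPT_recursion)
  fix P r
  assume "P \<subseteq> {0..<p} \<and> r \<in> P \<and> card P \<ge> 2"
  then show "finite P" "r \<in> P" "2 \<le> card P" "0 \<le> ga r * m r"
    using finite_subset m_nonneg ga_nonneg by auto
qed

end
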